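(* The set $\mathcal{B}_{2,4}$ consisting of the six identities (M1) $(xy)(zt)=(xz)(yt)$, (M2) $(xy)(zt)=(ty)(zx)$, (M3) $((xy)z)t=((xt)z)y$, (M4) $(x(yz))t=(x(tz))y$, (M5) $x((yz)t)=z((yx)t)$, (M6) $x(y(zt))=z(y(xt))$, together with $x(xy)=y$, is a basis for $\Sigma_{2,4}$.
   Context: $\Sigma_{2,4}$ is the set of groupoid identities satisfied in the integers $\mathbb{Z}$ by both binary operations $x-y$ and $-x-y$. A basis is a set of identities whose equational consequences are exactly $\Sigma_{2,4}$. *)

theory Defs
  imports Main
begin

datatype gterm = Var nat | App gterm gterm (infixl "\<cdot>" 70)

primrec eval :: "('a \<Rightarrow> 'a \<Rightarrow> 'a) \<Rightarrow> (nat \<Rightarrow> 'a) \<Rightarrow> gterm \<Rightarrow> 'a" where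
  "eval f v (Var n) = v n"
| "eval f v (App s t) = f (eval f v s) (eval f v t)"

primrec subst :: "(nat \<Rightarrow> gterm) \<Rightarrow> gterm \<Rightarrow> gterm" where
  "subst \<sigma> (Var n) = \<sigma> n"
| "subst \<sigma> (App s t) = App (subst \<sigma> s) (subst \<sigma> t)"

inductive derivable :: "(gterm \<times> gterm) set \<Rightarrow> gterm \<Rightarrow> gterm \<Rightarrow> bool" for E where
  ax: "(s, t) \<in> E \<Longrightarrow> derivable E (subst \<sigma> s) (subst \<sigma> t)"
| refl: "derivable E s s"
| sym: "derivable E s t \<Longrightarrow> derivable E t s"
| trans: "derivable E s t \<Longrightarrow> derivable E t u \<Longrightarrow> derivable E s u"
| cong: "derivable E s s' \<Longrightarrow> derivable E t t' \<Longrightarrow> derivable E (App s t) (App s' t')"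

definition consequences :: "(gterm \<times> gterm) set \<Rightarrow> (gterm \<times> gterm) set" where
  "consequences E = {(s, t). derivable E s t}"

definition holds_in :: "('a \<Rightarrow> 'a \<Rightarrow> 'a) \<Rightarrow> gterm \<times> gterm \<Rightarrow> bool" where
  "holds_in f e \<longleftrightarrow> (\<forall>v. eval f v (fst e) = eval f v (snd e))"

definition Sigma24 :: "(gterm \<times> gterm) set" where
  "Sigma24 = {e. holds_in (\<lambda>x y :: int. x - y) e \<and> holds_in (\<lambda>x y :: int. - x - y) e}"

definition is_basis :: "(gterm \<times> gterm) set \<Rightarrow> (gterm \<times> gterm) set \<Rightarrow> bool" where
  "is_basis B \<Sigma> \<longleftrightarrow> consequences B = \<Sigma>"

abbreviation "vx \<equiv> Var 0"
abbreviation "vy \<equiv> Var 1"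
abbreviation "vz \<equiv> Var 2"
abbreviation "vt \<equiv> Var 3"

definition B24 :: "(gterm \<times> gterm) set" where
  "B24 = {
     ((vx \<cdot> vy) \<cdot> (vz \<cdot> vt), (vx \<cdot> vz) \<cdot> (vy \<cdot> vt)),
     ((vx \<cdot> vy) \<cdot> (vz \<cdot> vt), (vt \<cdot> vy) \<cdot> (vz \<cdot> vx)),
     (((vx \<cdot> vy) \<cdot> vz) \<cdot> vt, ((vx \<cdot> vt) \<cdot> vz) \<cdot> vy),
     ((vx \<cdot> (vy \<cdot> vz)) \<cdot> vt, (vx \<cdot> (vt \<cdot> vz)) \<cdot> vy),
     (vx \<cdot> ((vy \<cdot> vz) \<cdot> vt), vz \<cdot> ((vy \<cdot> vx) \<cdot> vt)),
     (vx \<cdot> (vy \<cdot> (vz \<cdot> vt)), vz \<cdot> (vy \<cdot> (vx \<cdot> vt)))}"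

end

theory Submission
  imports Defs "HOL-Library.Multiset"
begin

text \<open>Fix an element e of a groupoid satisfying the seven identities and put k = e e. Then
  a + b = (a e) (k b) is an abelian group operation with zero e, \<phi> a = a k (twist) is an involutive
  automorphism of it, and x y = \<phi> x + k - y. Hence in the free algebra every term is a signed sum
  of atoms g and \<phi> g, where g is either a variable other than e or the constant k. The integer
  models x y = p x - y with p = \<plusminus>1 are exactly the groupoids x - y and -x - y, in which \<phi> acts as
  multiplication by p; evaluating at suitable assignments recovers every coefficient of the signed
  sum. So both sides of an identity of Sigma24 have the same normal form and the identity is
  derivable.\<close>

lemma eval_subst: "eval f v (subst \<sigma> t) = eval f (\<lambda>n. eval f v (\<sigma> n)) t"
  by (induction t) simp_all

lemma holds_in_if_derivable:
  assumes "\<And>e. e \<in> E \<Longrightarrow> holds_in f e"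
    and "derivable E s t"
  shows "holds_in f (s, t)"
  using assms(2) unfolding holds_in_def
  by induction (use assms(1) in \<open>auto simp: holds_in_def eval_subst\<close>)

locale b24_groupoid =
  fixes mult :: "'a \<Rightarrow> 'a \<Rightarrow> 'a" (infixl "\<star>" 70)
  assumes left_cancel: "x \<star> (x \<star> y) = y"
    and M1: "(x \<star> y) \<star> (z \<star> t) = (x \<star> z) \<star> (y \<star> t)"
    and M2: "(x \<star> y) \<star> (z \<star> t) = (t \<star> y) \<star> (z \<star> x)"
    and M3: "((x \<star> y) \<star> z) \<star> t = ((x \<star> t) \<star> z) \<star> y"
    and M4: "(x \<star> (y \<star> z)) \<star> t = (x \<star> (t \<star> z)) \<star> y"
    and M5: "x \<star> ((y \<star> z) \<star> t) = z \<star> ((y \<star> x) \<star> t)"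
    and M6: "x \<star> (y \<star> (z \<star> t)) = z \<star> (y \<star> (x \<star> t))"

locale pointed_b24_groupoid =
  b24_groupoid mult for mult :: "'a \<Rightarrow> 'a \<Rightarrow> 'a" (infixl "\<star>" 70) +
  fixes e :: 'a
begin

definition add :: "'a \<Rightarrow> 'a \<Rightarrow> 'a" where
  "add a b = (a \<star> e) \<star> ((e \<star> e) \<star> b)"

definition neg :: "'a \<Rightarrow> 'a" where
  "neg a = (e \<star> e) \<star> ((a \<star> e) \<star> e)"

definition twist :: "'a \<Rightarrow> 'a" where
  "twist a = a \<star> (e \<star> e)"

lemma add_commute: "add a b = add b a"
  unfolding add_def by (rule M2)

lemma add_assoc: "add (add a b) c = add a (add b c)"
  unfolding add_def by (metis M1 M4 M5)

lemma add_zero_left: "add e a = a"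
  unfolding add_def by (rule left_cancel)

lemma add_neg_left: "add (neg a) a = e"
  unfolding add_def neg_def using left_cancel M4 M5 by simp

lemma twist_add: "twist (add a b) = add (twist a) (twist b)"
  unfolding add_def twist_def by (metis left_cancel M5 M1)

lemma twist_unit: "twist e = e"
  unfolding twist_def by (rule left_cancel)

lemma twist_twist: "twist (twist a) = a"
  unfolding twist_def by (metis left_cancel M2)

lemma add_mult_right: "add (a \<star> b) b = add (twist a) (e \<star> e)"
  unfolding add_def twist_def using left_cancel M3 M4 M5 M6 by simp

end

abbreviation basis24 :: "(gterm \<times> gterm) set" where
  "basis24 \<equiv> insert (vx \<cdot> (vx \<cdot> vy), vy) B24"

quotient_type free24 = gterm / "derivable basis24"
proof (rule equivpI)
  show "reflp (derivable basis24)" by (rule reflpI) (rule derivable.refl)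
  show "symp (derivable basis24)" by (rule sympI) (erule derivable.sym)
  show "transp (derivable basis24)" by (rule transpI) (erule (1) derivable.trans)
qed

lift_definition free_mult :: "free24 \<Rightarrow> free24 \<Rightarrow> free24" is App
  by (rule derivable.cong)

lemma eval_free_mult: "eval free_mult (abs_free24 \<circ> \<sigma>) t = abs_free24 (subst \<sigma> t)"
  by (induction t) (simp_all add: free_mult.abs_eq)

lemma free24_models_basis24: "\<forall>(s, s') \<in> basis24. eval free_mult v s = eval free_mult v s'"
proof clarify
  fix s s' assume "(s, s') \<in> basis24"
  moreover have "v = abs_free24 \<circ> (rep_free24 \<circ> v)"
    by (simp add: fun_eq_iff Quotient3_abs_rep[OF Quotient3_free24])
  ultimately show "eval free_mult v s = eval free_mult v s'"
    by (metis eval_free_mult free24.abs_eq_iff derivable.ax)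
qed

lemmas free24_identities =
  free24_models_basis24[of "(!) [x, y, z, t]" for x y z t, unfolded B24_def, simplified]

interpretation free24: b24_groupoid free_mult
  by unfold_locales (use free24_identities in blast)+

definition free_unit :: free24 where
  "free_unit = abs_free24 vx"

interpretation free24: pointed_b24_groupoid free_mult free_unit ..

instantiation free24 :: ab_group_add
begin

definition zero_free24 :: free24 where
  "0 = free_unit"

definition plus_free24 :: "free24 \<Rightarrow> free24 \<Rightarrow> free24" where
  "a + b = free24.add a b"

definition uminus_free24 :: "free24 \<Rightarrow> free24" where
  "- a = free24.neg a"

definition minus_free24 :: "free24 \<Rightarrow> free24 \<Rightarrow> free24" where
  "a - b = a + - (b :: free24)"

instance
proof
  fix a b c :: free24
  show "a + b + c = a + (b + c)"
    unfolding plus_free24_def by (rule free24.add_assoc)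
  show "a + b = b + a"
    unfolding plus_free24_def by (rule free24.add_commute)
  show "0 + a = a"
    unfolding plus_free24_def zero_free24_def by (rule free24.add_zero_left)
  show "- a + a = 0"
    unfolding plus_free24_def zero_free24_def uminus_free24_def by (rule free24.add_neg_left)
  show "a - b = a + - b"
    by (rule minus_free24_def)
qed

end

lemma twist_free24_add: "free24.twist (a + b) = free24.twist a + free24.twist b"
  unfolding plus_free24_def by (rule free24.twist_add)

lemma twist_free24_zero: "free24.twist 0 = 0"
  unfolding zero_free24_def by (rule free24.twist_unit)

lemma twist_free24_diff: "free24.twist (a - b) = free24.twist a - free24.twist b"
proof -
  have "free24.twist (a - b) + free24.twist b = free24.twist a"
    by (simp flip: twist_free24_add)
  then show ?thesis
    by (simp add: eq_diff_eq)
qed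

lemma free_mult_eq_affine: "free_mult a b = free24.twist a + free_mult 0 0 - b"
proof -
  have "free_mult a b + b = free24.twist a + free_mult 0 0"
    unfolding plus_free24_def zero_free24_def by (rule free24.add_mult_right)
  then show ?thesis
    by (simp add: eq_diff_eq)
qed

text \<open>An atom (b, n) stands for \<phi>^b x_n, except that (b, 0) stands for \<phi>^b k: the variable x_0
  is the unit e, i.e. the zero of the group.\<close>

fun pos_atoms :: "gterm \<Rightarrow> (bool \<times> nat) multiset"
  and neg_atoms :: "gterm \<Rightarrow> (bool \<times> nat) multiset" where
  "pos_atoms (Var n) = (if n = 0 then {#} else {#(False, n)#})"
| "pos_atoms (s \<cdot> t) = image_mset (apfst Not) (pos_atoms s) + neg_atoms t + {#(False, 0)#}"
| "neg_atoms (Var n) = {#}"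
| "neg_atoms (s \<cdot> t) = image_mset (apfst Not) (neg_atoms s) + pos_atoms t"

definition atom_coeff :: "gterm \<Rightarrow> bool \<times> nat \<Rightarrow> int" where
  "atom_coeff t a = int (count (pos_atoms t) a) - int (count (neg_atoms t) a)"

definition atom_free24 :: "bool \<times> nat \<Rightarrow> free24" where
  "atom_free24 = (\<lambda>(b, n). (if b then free24.twist else id)
                             (if n = 0 then free_mult 0 0 else abs_free24 (Var n)))"

lemma twist_free24_sum_mset: "free24.twist (\<Sum>a\<in>#M. f a) = (\<Sum>a\<in>#M. free24.twist (f a))"
  by (induction M) (simp_all add: twist_free24_add twist_free24_zero)

lemma atom_free24_apfst_Not: "atom_free24 (apfst Not a) = free24.twist (atom_free24 a)"
  by (cases a) (simp add: atom_free24_def free24.twist_twist)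

lemma abs_free24_atoms:
  "abs_free24 t = (\<Sum>a\<in>#pos_atoms t. atom_free24 a) - (\<Sum>a\<in>#neg_atoms t. atom_free24 a)"
proof (induction t)
  case (Var n)
  then show ?case
    by (simp add: atom_free24_def zero_free24_def free_unit_def)
next
  case (App s t)
  let ?S = "\<lambda>M. \<Sum>a\<in>#M. atom_free24 a"
  have pos: "?S (pos_atoms (s \<cdot> t))
              = free24.twist (?S (pos_atoms s)) + ?S (neg_atoms t) + free_mult 0 0"
    by (simp add: twist_free24_sum_mset atom_free24_apfst_Not multiset.map_comp o_def
        atom_free24_def[THEN fun_cong, of "(False, 0)"])
  have neg: "?S (neg_atoms (s \<cdot> t)) = free24.twist (?S (neg_atoms s)) + ?S (pos_atoms t)"
    by (simp add: twist_free24_sum_mset atom_free24_apfst_Not multiset.map_comp o_def)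
  have "abs_free24 (s \<cdot> t) = free24.twist (abs_free24 s) + free_mult 0 0 - abs_free24 t"
    by (simp flip: free_mult.abs_eq free_mult_eq_affine)
  then show ?case
    unfolding pos neg App.IH twist_free24_diff by (simp add: algebra_simps)
qed

text \<open>In the model x y = p x - y with v 0 as origin, \<phi> is multiplication by p and k lies at
  offset (p - 2) v 0.\<close>

definition atom_int :: "int \<Rightarrow> (nat \<Rightarrow> int) \<Rightarrow> bool \<times> nat \<Rightarrow> int" where
  "atom_int p v = (\<lambda>(b, n). (if b then p else 1) * (if n = 0 then (p - 2) * v 0 else v n - v 0))"

lemma atom_int_apfst_Not: "p * p = 1 \<Longrightarrow> atom_int p v (apfst Not a) = p * atom_int p v a"
  by (cases a) (simp add: atom_int_def mult.assoc[symmetric])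

lemma eval_int_atoms:
  assumes "p * p = 1"
  shows "eval (\<lambda>x y. p * x - y) v t
           = v 0 + (\<Sum>a\<in>#pos_atoms t. atom_int p v a) - (\<Sum>a\<in>#neg_atoms t. atom_int p v a)"
proof (induction t)
  case (Var n)
  then show ?case
    by (simp add: atom_int_def)
next
  case (App s t)
  let ?S = "\<lambda>M. \<Sum>a\<in>#M. atom_int p v a"
  have pos: "?S (pos_atoms (s \<cdot> t)) = p * ?S (pos_atoms s) + ?S (neg_atoms t) + (p - 2) * v 0"
    by (simp add: multiset.map_comp o_def atom_int_apfst_Not[OF assms] sum_mset_distrib_left)
      (simp add: atom_int_def)
  have neg: "?S (neg_atoms (s \<cdot> t)) = p * ?S (neg_atoms s) + ?S (pos_atoms t)"
    by (simp add: multiset.map_comp o_def atom_int_apfst_Not[OF assms] sum_mset_distrib_left)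
  show ?case
    unfolding eval.simps pos neg App.IH by (simp add: algebra_simps)
qed

lemma eval_int_two_atoms:
  assumes "p * p = 1"
    and "\<And>a. atom_int p v a
                = (if a = (False, n) then c else 0) + (if a = (True, n) then d else 0)"
  shows "eval (\<lambda>x y. p * x - y) v t
           = v 0 + c * atom_coeff t (False, n) + d * atom_coeff t (True, n)"
proof -
  have "atom_int p v
          = (\<lambda>a. (if a = (False, n) then c else 0) + (if a = (True, n) then d else 0))"
    using assms(2) by blast
  then show ?thesis
    unfolding eval_int_atoms[OF assms(1)]
    by (simp add: sum_mset.distrib sum_mset_delta atom_coeff_def algebra_simps)
qed

lemma Sigma24_eq: "Sigma24 = {e. \<forall>p::int. p * p = 1 \<longrightarrow> holds_in (\<lambda>x y. p * x - y) e}"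
  unfolding Sigma24_def square_eq_1_iff by auto

lemma int_models_basis24:
  assumes "p * p = (1 :: int)" and "e \<in> basis24"
  shows "holds_in (\<lambda>x y. p * x - y) e"
  using assms unfolding square_eq_1_iff B24_def holds_in_def by (auto simp: algebra_simps)

lemma atom_coeff_eq_if_Sigma24:
  assumes "(s, t) \<in> Sigma24"
  shows "atom_coeff s = atom_coeff t"
proof (rule ext, clarify)
  fix b n
  have model: "eval (\<lambda>x y. p * x - y) v s = eval (\<lambda>x y. p * x - y) v t"
    if "p * p = 1" for p :: int and v
    using assms that unfolding Sigma24_eq holds_in_def by auto
  txt \<open>At p = 1 and p = -1 the chosen assignments yield multiples of the sum and of the
    difference of the two coefficients of x_n (or of k).\<close>
  have "atom_coeff s (False, n) = atom_coeff t (False, n)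
          \<and> atom_coeff s (True, n) = atom_coeff t (True, n)"
  proof (cases "n = 0")
    case True
    have "(p - 2) * atom_coeff s (False, 0) + p * (p - 2) * atom_coeff s (True, 0)
            = (p - 2) * atom_coeff t (False, 0) + p * (p - 2) * atom_coeff t (True, 0)"
      if p: "p * p = 1" for p :: int
    proof -
      have weights: "atom_int p (\<lambda>_. 1) a
              = (if a = (False, 0) then p - 2 else 0) + (if a = (True, 0) then p * (p - 2) else 0)" for a
        by (cases a) (auto simp: atom_int_def)
      from model[OF p, of "\<lambda>_. 1"] show ?thesis
        unfolding eval_int_two_atoms[OF p weights] by simp
    qed
    from this[of 1] this[of "-1"] True show ?thesis
      by simp
  next
    case False
    have "atom_coeff s (False, n) + p * atom_coeff s (True, n)
            = atom_coeff t (False, n) + p * atom_coeff t (True, n)"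
      if p: "p * p = 1" for p :: int
    proof -
      have weights: "atom_int p (\<lambda>m. if m = n then 1 else 0) a
              = (if a = (False, n) then 1 else 0) + (if a = (True, n) then p else 0)" for a
        using False by (cases a) (auto simp: atom_int_def)
      from model[OF p, of "\<lambda>m. if m = n then 1 else 0"] show ?thesis
        unfolding eval_int_two_atoms[OF p weights] using False by simp
    qed
    from this[of 1] this[of "-1"] show ?thesis
      by simp
  qed
  then show "atom_coeff s (b, n) = atom_coeff t (b, n)"
    by (cases b) auto
qed

lemma derivable_if_Sigma24:
  assumes "(s, t) \<in> Sigma24"
  shows "derivable basis24 s t"
proof -
  have "pos_atoms s + neg_atoms t = pos_atoms t + neg_atoms s"
  proof (rule multiset_eqI)
    fix a
    show "count (pos_atoms s + neg_atoms t) a = count (pos_atoms t + neg_atoms s) a"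
      using fun_cong[OF atom_coeff_eq_if_Sigma24[OF assms], of a] by (simp add: atom_coeff_def)
  qed
  then have "(\<Sum>a\<in>#pos_atoms s. atom_free24 a) + (\<Sum>a\<in>#neg_atoms t. atom_free24 a)
              = (\<Sum>a\<in>#pos_atoms t. atom_free24 a) + (\<Sum>a\<in>#neg_atoms s. atom_free24 a)"
    by (metis image_mset_union sum_mset.union)
  then have "abs_free24 s = abs_free24 t"
    unfolding abs_free24_atoms by (simp add: algebra_simps)
  then show ?thesis
    by (simp add: free24.abs_eq_iff)
qed

theorem theorem3p1:
  shows "is_basis (insert (vx \<cdot> (vx \<cdot> vy), vy) B24) Sigma24"
proof -
  have "derivable basis24 s t \<longleftrightarrow> (s, t) \<in> Sigma24" for s t
    using holds_in_if_derivable[OF int_models_basis24] derivable_if_Sigma24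
    unfolding Sigma24_eq by blast
  then show ?thesis
    unfolding is_basis_def consequences_def by auto
qed

end
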